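(* Let $\ell,d,e$ be nonnegative integers with $e\ge d+m(q-1)$ and $\ell\le m$. Suppose $\mu\in\overline{\mathbb{M}}_d\cap\mathbb{F}_q[x_0,\dots,x_\ell]$ and $\nu\in\overline{\mathbb{M}}^{(\ell)}_e$. Then $\mu\mid\nu$ if and only if $\sigma^{(\ell)}(\mu)\mid\sigma^{(\ell)}(\nu)$.
   Context: $q$ is a prime power, $m$ a positive integer. A monomial $\mu\neq1$ in $x_0,\dots,x_m$ written $x_0^{a_0}\cdots x_k^{a_k}$ with $a_k>0$ is projectively reduced if $a_0,\dots,a_{k-1}\le q-1$; $1$ is projectively reduced. $\overline{\mathbb{M}}$ is the set of projectively reduced monomials and $\overline{\mathbb{M}}_e$ those of degree $e$. $\overline{\mathbb{M}}^{(0)}=\{x_0^a:a\ge0\}$ and for $1\le\ell\le m$, $\overline{\mathbb{M}}^{(\ell)}=\{x_0^{a_0}\cdots x_\ell^{a_\ell}\in\overline{\mathbb{M}}:a_\ell>0\}$; $\overline{\mathbb{M}}^{(\ell)}_e=\overline{\mathbb{M}}^{(\ell)}\cap\overline{\mathbb{M}}_e$. The specialization map $\sigma^{(\ell)}:\overline{\mathbb{M}}\to\overline{\mathbb{M}}\cup\{0\}$ sends $x_0^{a_0}\cdots x_{\ell-1}^{a_{\ell-1}}x_\ell^{a_\ell}$ to $x_0^{a_0}\cdots x_{\ell-1}^{a_{\ell-1}}$ and sends monomials not in $\mathbb{F}_q[x_0,\dots,x_\ell]$ to $0$ (empty products equal $1$). *)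

theory Defs
  imports "HOL-Computational_Algebra.Primes"
begin

text \<open>A monomial in x_0,...,x_m is represented by its exponent vector
  a :: nat => nat, with a i = 0 for i > m.  The monomial 1 is the zero vector.\<close>

definition is_monomial :: "nat \<Rightarrow> (nat \<Rightarrow> nat) \<Rightarrow> bool" where
  "is_monomial m a \<longleftrightarrow> (\<forall>i>m. a i = 0)"

definition mdeg :: "nat \<Rightarrow> (nat \<Rightarrow> nat) \<Rightarrow> nat" where
  "mdeg m a = (\<Sum>i\<le>m. a i)"

definition in_vars :: "nat \<Rightarrow> (nat \<Rightarrow> nat) \<Rightarrow> bool" where
  "in_vars l a \<longleftrightarrow> (\<forall>i>l. a i = 0)"

definition proj_reduced :: "nat \<Rightarrow> nat \<Rightarrow> (nat \<Rightarrow> nat) \<Rightarrow> bool" where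
  "proj_reduced q m a \<longleftrightarrow> is_monomial m a \<and>
     (a = (\<lambda>_. 0) \<or>
      (\<exists>k\<le>m. a k > 0 \<and> (\<forall>i>k. a i = 0) \<and> (\<forall>i<k. a i \<le> q - 1)))"

definition PRM_deg :: "nat \<Rightarrow> nat \<Rightarrow> nat \<Rightarrow> (nat \<Rightarrow> nat) set" where
  "PRM_deg q m e = {a. proj_reduced q m a \<and> mdeg m a = e}"

definition PRM_level :: "nat \<Rightarrow> nat \<Rightarrow> nat \<Rightarrow> (nat \<Rightarrow> nat) set" where
  "PRM_level q m l =
     (if l = 0 then {a. \<forall>i>0. a i = 0}
      else {a. proj_reduced q m a \<and> in_vars l a \<and> a l > 0})"

definition PRM_level_deg :: "nat \<Rightarrow> nat \<Rightarrow> nat \<Rightarrow> nat \<Rightarrow> (nat \<Rightarrow> nat) set" where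
  "PRM_level_deg q m l e = PRM_level q m l \<inter> PRM_deg q m e"

text \<open>Specialization map sigma^(l); the value 0 (zero polynomial) is represented by None.\<close>
definition sigma :: "nat \<Rightarrow> (nat \<Rightarrow> nat) \<Rightarrow> (nat \<Rightarrow> nat) option" where
  "sigma l a = (if in_vars l a then Some (a(l := 0)) else None)"

fun mdvd :: "(nat \<Rightarrow> nat) option \<Rightarrow> (nat \<Rightarrow> nat) option \<Rightarrow> bool" where
  "mdvd _ None = True"
| "mdvd None (Some _) = False"
| "mdvd (Some a) (Some b) = (\<forall>i. a i \<le> b i)"

definition prime_power :: "nat \<Rightarrow> bool" where
  "prime_power q \<longleftrightarrow> (\<exists>p k. prime p \<and> k > 0 \<and> q = p ^ k)"

end

theory Submission
  imports Defs
begin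

text \<open>A monomial \<nu> of level l has its exponents of x_0, ..., x_(l-1) bounded by q - 1 and
  involves no variable beyond x_l, so its degree e is at most l(q - 1) plus the exponent of x_l.
  That exponent is therefore at least e - m(q - 1) \<ge> d, which bounds the exponent of x_l in \<mu>.
  So \<mu> divides \<nu> as soon as the remaining exponents do, and these are exactly what the
  specialization retains.\<close>

lemma PRM_level_in_vars: "\<nu> \<in> PRM_level q m l \<Longrightarrow> in_vars l \<nu>"
  by (auto simp: PRM_level_def in_vars_def split: if_splits)

lemma PRM_level_exponent_le:
  assumes "\<nu> \<in> PRM_level q m l" and "i < l"
  shows "\<nu> i \<le> q - 1"
proof -
  from assms have reduced: "proj_reduced q m \<nu>" and vars: "in_vars l \<nu>" and pos: "\<nu> l > 0"
    by (auto simp: PRM_level_def split: if_splits)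
  from reduced pos obtain k where "\<nu> k > 0" "\<forall>j>k. \<nu> j = 0" "\<forall>j<k. \<nu> j \<le> q - 1"
    unfolding proj_reduced_def by (metis less_irrefl)
  moreover from this vars pos have "k = l"
    unfolding in_vars_def by (metis linorder_neqE_nat less_irrefl)
  ultimately show ?thesis using \<open>i < l\<close> by simp
qed

lemma exponent_le_mdeg: "i \<le> m \<Longrightarrow> a i \<le> mdeg m a"
  unfolding mdeg_def by (rule member_le_sum) auto

lemma mdeg_in_vars:
  assumes "in_vars l a" and "l \<le> m"
  shows "mdeg m a = (\<Sum>i<l. a i) + a l"
proof -
  have "mdeg m a = (\<Sum>i\<le>l. a i)"
    unfolding mdeg_def using assms
    by (intro sum.mono_neutral_right) (auto simp: in_vars_def)
  also have "\<dots> = (\<Sum>i<l. a i) + a l"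
    by (simp add: lessThan_Suc_atMost[symmetric])
  finally show ?thesis .
qed

lemma PRM_level_deg_le_last_exponent:
  assumes "\<nu> \<in> PRM_level_deg q m l e" and "l \<le> m"
  shows "e \<le> l * (q - 1) + \<nu> l"
proof -
  from assms(1) have level: "\<nu> \<in> PRM_level q m l" and deg: "mdeg m \<nu> = e"
    by (auto simp: PRM_level_deg_def PRM_deg_def)
  have "(\<Sum>i<l. \<nu> i) \<le> (\<Sum>i<l. q - 1)"
    using PRM_level_exponent_le[OF level] by (intro sum_mono) auto
  with mdeg_in_vars[OF PRM_level_in_vars[OF level] assms(2)] deg show ?thesis
    by simp
qed

lemma mdvd_iff_mdvd_sigma:
  assumes "in_vars l a" and "in_vars l b" and "a l \<le> b l"
  shows "mdvd (Some a) (Some b) \<longleftrightarrow> mdvd (sigma l a) (sigma l b)"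
  using assms by (auto simp: sigma_def)

theorem proposition4p1:
  fixes q m l d e :: nat and \<mu> \<nu> :: "nat \<Rightarrow> nat"
  assumes "prime_power q" and "m > 0"
    and "e \<ge> d + m * (q - 1)" and "l \<le> m"
    and "\<mu> \<in> PRM_deg q m d" and "in_vars l \<mu>"
    and "\<nu> \<in> PRM_level_deg q m l e"
  shows "mdvd (Some \<mu>) (Some \<nu>) \<longleftrightarrow> mdvd (sigma l \<mu>) (sigma l \<nu>)"
proof (rule mdvd_iff_mdvd_sigma)
  show "in_vars l \<nu>"
    using assms(7) by (auto simp: PRM_level_deg_def intro: PRM_level_in_vars)
  have "\<mu> l \<le> d"
    using exponent_le_mdeg[of l m \<mu>] assms(4,5) by (simp add: PRM_deg_def)
  moreover have "l * (q - 1) \<le> m * (q - 1)"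
    using assms(4) by simp
  ultimately show "\<mu> l \<le> \<nu> l"
    using PRM_level_deg_le_last_exponent[OF assms(7,4)] assms(3) by linarith
qed (fact assms(6))

end
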